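(* (i) If $\rho_0$ and $\rho_{\rm target}$ are diagonal density matrices, then for the zero control $\bar c\equiv0$ the solutions $\bar\rho$ of the master equation and $\bar\chi$ of the adjoint system are diagonal for all $t\in[0,T]$, and $\mathcal K^u(\bar\chi(t),\bar\rho(t))=0$ for all $t\in[0,T]$, for any Hermitian $V$ and all admissible parameter values. (ii) If moreover $\rho_0=\frac14\mathbb I_4$ and $\rho_{\rm target}={\rm diag}(1,0,0,0)$, then for all $t\in[0,T]$ $$\mathcal K^{n_1}(\bar\chi(t),\bar\rho(t))=-e^{-2\varepsilon(\Omega_1+\Omega_2)T}\big(e^{2\varepsilon\Omega_1t}-1\big)\big(2e^{2\varepsilon\Omega_2T}-1\big)\varepsilon\Omega_1\le0,$$ $$\mathcal K^{n_2}(\bar\chi(t),\bar\rho(t))=-e^{-2\varepsilon(\Omega_1+\Omega_2)T}\big(e^{2\varepsilon\Omega_2t}-1\big)\big(2e^{2\varepsilon\Omega_1T}-1\big)\varepsilon\Omega_2\le0,$$ and consequently the zero control $\bar c\equiv0$ satisfies the maximum conditions $\max_{|u|\le\mu}\mathcal K^u(\bar\chi(t),\bar\rho(t))u=\mathcal K^u(\bar\chi(t),\bar\rho(t))\cdot0$ and $\max_{n_j\in[0,n_{\max}]}\mathcal K^{n_j}(\bar\chi(t),\bar\rho(t))n_j=\mathcal K^{n_j}(\bar\chi(t),\bar\rho(t))\cdot 0$ ($j=1,2$) for all $t\in[0,T]$, for every $T>0$ and all admissible parameter values.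
   Context: Let $\sigma_x,\sigma_y,\sigma_z$ be the Pauli matrices, $\mathbb I_2,\mathbb I_4$ identity matrices, $\sigma^+=\begin{pmatrix}0&0\\1&0\end{pmatrix}$, $\sigma^-=\begin{pmatrix}0&1\\0&0\end{pmatrix}$, $\sigma_1^\pm=\sigma^\pm\otimes\mathbb I_2$, $\sigma_2^\pm=\mathbb I_2\otimes\sigma^\pm$, $W_1=\sigma_z\otimes\mathbb I_2$, $W_2=\mathbb I_2\otimes\sigma_z$. Fix parameters $\varepsilon,\omega_j,\Lambda_j,\Omega_j>0$ ($j=1,2$), $H_0=\frac{\omega_1}{2}W_1+\frac{\omega_2}{2}W_2$, and a Hermitian $4\times4$ matrix $V$ (in the paper $V=Q_1\otimes\mathbb I_2+\mathbb I_2\otimes Q_2$ or $V=Q_1\otimes Q_2$ with $Q_j=\sin\theta_j\cos\varphi_j\sigma_x+\sin\theta_j\sin\varphi_j\sigma_y+\cos\theta_j\sigma_z$). For $c=(u,n_1,n_2)\in\mathbb R^3$ let $H_c=H_0+\varepsilon\sum_{j=1}^2\Lambda_j n_jW_j+uV$ and $$\mathcal L^D_n(\rho)=\sum_{j=1}^2\Big[\Omega_j(n_j+1)\big(2\sigma_j^-\rho\sigma_j^+-\{\sigma_j^+\sigma_j^-,\rho\}\big)+\Omega_jn_j\big(2\sigma_j^+\rho\sigma_j^--\{\sigma_j^-\sigma_j^+,\rho\}\big)\Big],$$ $$\mathcal L^{D,\dagger}_n(\chi)=\sum_{j=1}^2\Big[\Omega_j(n_j+1)\big(2\sigma_j^+\chi\sigma_j^--\{\sigma_j^+\sigma_j^-,\chi\}\big)+\Omega_jn_j\big(2\sigma_j^-\chi\sigma_j^+-\{\sigma_j^-\sigma_j^+,\chi\}\big)\Big],$$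 where $\{A,B\}=AB+BA$, $[A,B]=AB-BA$. Fix $T>0$, $\mu,n_{\max}>0$, $Q=[-\mu,\mu]\times[0,n_{\max}]^2$; admissible controls are piecewise continuous $c=(u,n_1,n_2):[0,T]\to Q$. Fix density matrices $\rho_0,\rho_{\rm target}$ ($4\times 4$, positive semidefinite, trace one). The master equation is $\dot\rho(t)=-i[H_{c(t)},\rho(t)]+\varepsilon\mathcal L^D_{n(t)}(\rho(t))$, $\rho(0)=\rho_0$; the adjoint system is $\dot\chi(t)=-i[H_{c(t)},\chi(t)]-\varepsilon\mathcal L^{D,\dagger}_{n(t)}(\chi(t))$, $\chi(T)=\rho_{\rm target}$ (solved backward). For matrices, $\langle A,B\rangle={\rm Tr}(A^\dagger B)$. The objective is $J_1(c)={\rm Tr}(\rho(T)\rho_{\rm target})$ where $\rho$ solves the master equation with control $c$. The switching functions $\mathcal K^c=(\mathcal K^u,\mathcal K^{n_1},\mathcal K^{n_2})$ are the coefficients of $u,n_1,n_2$ in $\langle\chi,-i[H_c,\rho]+\varepsilon\mathcal L^D_n(\rho)\rangle$: $\mathcal K^u(\chi,\rho)=\langle\chi,-i[V,\rho]\rangle$, $\mathcal K^{n_j}(\chi,\rho)=\big\langle\chi,-i\varepsilon\Lambda_j[W_j,\rho]+\varepsilon\Omega_j\big(2\sigma_j^-\rho\sigma_j^++2\sigma_j^+\rho\sigma_j^--2\rho\big)\big\rangle$, $j=1,2$ (real for Hermitian $\chi,\rho$). *)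

theory Defs
  imports "HOL-Analysis.Analysis"
begin

text \<open>Qubit basis indexed by bool (False = |0>, True = |1>); the two-qubit
space is indexed by bool \<times> bool with the tensor basis |a b> = (a,b), so the
standard ordering |00>,|01>,|10>,|11> corresponds to (F,F),(F,T),(T,F),(T,T).\<close>

type_synonym mat2 = "complex ^ bool ^ bool"
type_synonym mat4 = "complex ^ (bool \<times> bool) ^ (bool \<times> bool)"

definition cscale :: "complex \<Rightarrow> complex ^ 'n ^ 'm \<Rightarrow> complex ^ 'n ^ 'm" where
  "cscale c A = (\<chi> i j. c * A $ i $ j)"

definition cadj :: "complex ^ 'n ^ 'n \<Rightarrow> complex ^ 'n ^ 'n" where
  "cadj A = (\<chi> i j. cnj (A $ j $ i))"

definition hermitian :: "complex ^ 'n ^ 'n \<Rightarrow> bool" where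
  "hermitian A \<longleftrightarrow> cadj A = A"

definition psd :: "complex ^ 'n ^ 'n \<Rightarrow> bool" where
  "psd A \<longleftrightarrow> (\<forall>x :: complex ^ 'n. 0 \<le> Re (\<Sum>i\<in>UNIV. cnj (x $ i) * (A *v x) $ i))"

definition density_matrix :: "complex ^ 'n ^ 'n \<Rightarrow> bool" where
  "density_matrix A \<longleftrightarrow> hermitian A \<and> psd A \<and> trace A = 1"

definition is_diag :: "complex ^ 'n ^ 'n \<Rightarrow> bool" where
  "is_diag A \<longleftrightarrow> (\<forall>i j. i \<noteq> j \<longrightarrow> A $ i $ j = 0)"

definition hs_inner :: "complex ^ 'n ^ 'n \<Rightarrow> complex ^ 'n ^ 'n \<Rightarrow> complex" where
  "hs_inner A B = trace (cadj A ** B)"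

definition commut :: "complex ^ 'n ^ 'n \<Rightarrow> complex ^ 'n ^ 'n \<Rightarrow> complex ^ 'n ^ 'n" where
  "commut A B = A ** B - B ** A"

definition anticommut :: "complex ^ 'n ^ 'n \<Rightarrow> complex ^ 'n ^ 'n \<Rightarrow> complex ^ 'n ^ 'n" where
  "anticommut A B = A ** B + B ** A"

definition kron :: "mat2 \<Rightarrow> mat2 \<Rightarrow> mat4" where
  "kron A B = (\<chi> i j. A $ fst i $ fst j * B $ snd i $ snd j)"

definition sigma_z :: mat2 where
  "sigma_z = (\<chi> i j. if i = j then (if i then -1 else 1) else 0)"

definition sigma_plus :: mat2 where
  "sigma_plus = (\<chi> i j. if i \<and> \<not> j then 1 else 0)"

definition sigma_minus :: mat2 where
  "sigma_minus = (\<chi> i j. if \<not> i \<and> j then 1 else 0)"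

definition I2 :: mat2 where "I2 = mat 1"
definition I4 :: mat4 where "I4 = mat 1"

definition sp1 :: mat4 where "sp1 = kron sigma_plus I2"
definition sm1 :: mat4 where "sm1 = kron sigma_minus I2"
definition sp2 :: mat4 where "sp2 = kron I2 sigma_plus"
definition sm2 :: mat4 where "sm2 = kron I2 sigma_minus"
definition W1 :: mat4 where "W1 = kron sigma_z I2"
definition W2 :: mat4 where "W2 = kron I2 sigma_z"

definition H0 :: "real \<Rightarrow> real \<Rightarrow> mat4" where
  "H0 \<omega>1 \<omega>2 = cscale (of_real (\<omega>1 / 2)) W1 + cscale (of_real (\<omega>2 / 2)) W2"

definition Hc :: "real \<Rightarrow> real \<Rightarrow> real \<Rightarrow> real \<Rightarrow> real \<Rightarrow> mat4 \<Rightarrow> real \<Rightarrow> real \<Rightarrow> real \<Rightarrow> mat4" where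
  "Hc \<epsilon> \<omega>1 \<omega>2 \<Lambda>1 \<Lambda>2 V u n1 n2 =
     H0 \<omega>1 \<omega>2 + (cscale (of_real (\<epsilon> * \<Lambda>1 * n1)) W1 + cscale (of_real (\<epsilon> * \<Lambda>2 * n2)) W2)
     + cscale (of_real u) V"

definition LD :: "real \<Rightarrow> real \<Rightarrow> real \<Rightarrow> real \<Rightarrow> mat4 \<Rightarrow> mat4" where
  "LD \<Omega>1 \<Omega>2 n1 n2 \<rho> =
     (cscale (of_real (\<Omega>1 * (n1 + 1))) (cscale 2 (sm1 ** \<rho> ** sp1) - anticommut (sp1 ** sm1) \<rho>)
      + cscale (of_real (\<Omega>1 * n1)) (cscale 2 (sp1 ** \<rho> ** sm1) - anticommut (sm1 ** sp1) \<rho>))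
   + (cscale (of_real (\<Omega>2 * (n2 + 1))) (cscale 2 (sm2 ** \<rho> ** sp2) - anticommut (sp2 ** sm2) \<rho>)
      + cscale (of_real (\<Omega>2 * n2)) (cscale 2 (sp2 ** \<rho> ** sm2) - anticommut (sm2 ** sp2) \<rho>))"

definition LD_adj :: "real \<Rightarrow> real \<Rightarrow> real \<Rightarrow> real \<Rightarrow> mat4 \<Rightarrow> mat4" where
  "LD_adj \<Omega>1 \<Omega>2 n1 n2 chi =
     (cscale (of_real (\<Omega>1 * (n1 + 1))) (cscale 2 (sp1 ** chi ** sm1) - anticommut (sp1 ** sm1) chi)
      + cscale (of_real (\<Omega>1 * n1)) (cscale 2 (sm1 ** chi ** sp1) - anticommut (sm1 ** sp1) chi))
   + (cscale (of_real (\<Omega>2 * (n2 + 1))) (cscale 2 (sp2 ** chi ** sm2) - anticommut (sp2 ** sm2) chi)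
      + cscale (of_real (\<Omega>2 * n2)) (cscale 2 (sm2 ** chi ** sp2) - anticommut (sm2 ** sp2) chi))"

definition master_rhs :: "real \<Rightarrow> real \<Rightarrow> real \<Rightarrow> real \<Rightarrow> real \<Rightarrow> real \<Rightarrow> real \<Rightarrow> mat4
    \<Rightarrow> real \<Rightarrow> real \<Rightarrow> real \<Rightarrow> mat4 \<Rightarrow> mat4" where
  "master_rhs \<epsilon> \<omega>1 \<omega>2 \<Lambda>1 \<Lambda>2 \<Omega>1 \<Omega>2 V u n1 n2 \<rho> =
     cscale (- \<i>) (commut (Hc \<epsilon> \<omega>1 \<omega>2 \<Lambda>1 \<Lambda>2 V u n1 n2) \<rho>)
     + cscale (of_real \<epsilon>) (LD \<Omega>1 \<Omega>2 n1 n2 \<rho>)"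

definition adjoint_rhs :: "real \<Rightarrow> real \<Rightarrow> real \<Rightarrow> real \<Rightarrow> real \<Rightarrow> real \<Rightarrow> real \<Rightarrow> mat4
    \<Rightarrow> real \<Rightarrow> real \<Rightarrow> real \<Rightarrow> mat4 \<Rightarrow> mat4" where
  "adjoint_rhs \<epsilon> \<omega>1 \<omega>2 \<Lambda>1 \<Lambda>2 \<Omega>1 \<Omega>2 V u n1 n2 chi =
     cscale (- \<i>) (commut (Hc \<epsilon> \<omega>1 \<omega>2 \<Lambda>1 \<Lambda>2 V u n1 n2) chi)
     - cscale (of_real \<epsilon>) (LD_adj \<Omega>1 \<Omega>2 n1 n2 chi)"

definition K_u :: "mat4 \<Rightarrow> mat4 \<Rightarrow> mat4 \<Rightarrow> complex" where
  "K_u V chi \<rho> = hs_inner chi (cscale (- \<i>) (commut V \<rho>))"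

definition K_n_gen :: "real \<Rightarrow> real \<Rightarrow> real \<Rightarrow> mat4 \<Rightarrow> mat4 \<Rightarrow> mat4 \<Rightarrow> mat4 \<Rightarrow> mat4 \<Rightarrow> complex" where
  "K_n_gen \<epsilon> \<Lambda> \<Omega> W sm sp chi \<rho> =
     hs_inner chi (cscale (- \<i> * of_real (\<epsilon> * \<Lambda>)) (commut W \<rho>)
       + cscale (of_real (\<epsilon> * \<Omega>)) (cscale 2 (sm ** \<rho> ** sp) + cscale 2 (sp ** \<rho> ** sm) - cscale 2 \<rho>))"

definition K_n1 :: "real \<Rightarrow> real \<Rightarrow> real \<Rightarrow> mat4 \<Rightarrow> mat4 \<Rightarrow> complex" where
  "K_n1 \<epsilon> \<Lambda>1 \<Omega>1 = K_n_gen \<epsilon> \<Lambda>1 \<Omega>1 W1 sm1 sp1"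

definition K_n2 :: "real \<Rightarrow> real \<Rightarrow> real \<Rightarrow> mat4 \<Rightarrow> mat4 \<Rightarrow> complex" where
  "K_n2 \<epsilon> \<Lambda>2 \<Omega>2 = K_n_gen \<epsilon> \<Lambda>2 \<Omega>2 W2 sm2 sp2"

definition target00 :: mat4 where
  "target00 = (\<chi> i j. if i = (False, False) \<and> j = (False, False) then 1 else 0)"

end

theory Submission
  imports Defs
begin

(* For the zero control the Hamiltonian is H_0, which is diagonal, and the dissipator sends
   diagonal matrices to diagonal ones and matrices with zero diagonal to matrices with zero
   diagonal.  Hence the off-diagonal part of a solution of the master equation (or of the
   adjoint system) solves the same linear ODE, and by Gronwall-type uniqueness it vanishes
   identically once it vanishes at one end point.  For diagonal chi and rho the commutator
   [V, rho] has zero diagonal, so K^u = 0.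
   For rho_0 = I/4 and rho_target = diag(1,0,0,0) both solutions are explicit product states:
   the population of each qubit relaxes at rate 2 eps Omega_j.  Evaluating K^{n_j} on them
   gives the closed forms, which are nonpositive, so u = n_j = 0 maximize the switching
   terms. *)

lemma nonneg_vanishes_forward_if_deriv_le_mult:
  fixes f f' :: "real \<Rightarrow> real"
  assumes "a \<le> b" and cont: "continuous_on {a..b} f"
    and deriv: "\<And>s. a < s \<Longrightarrow> s < b \<Longrightarrow> (f has_real_derivative f' s) (at s)"
    and le: "\<And>s. a < s \<Longrightarrow> s < b \<Longrightarrow> f' s \<le> c * f s"
    and nonneg: "f b \<ge> 0" and "f a = 0"
  shows "f b = 0"
proof -
  define g where "g s = f s * exp (- c * s)" for s
  have "g b \<le> g a"
  proof (rule DERIV_nonpos_imp_decreasing_open[OF \<open>a \<le> b\<close>])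
    fix s assume s: "a < s" "s < b"
    have "(g has_real_derivative (f' s - c * f s) * exp (- c * s)) (at s)"
      unfolding g_def using deriv[OF s]
      by (auto intro!: derivative_eq_intros simp: algebra_simps)
    moreover have "(f' s - c * f s) * exp (- c * s) \<le> 0"
      using le[OF s] by (simp add: mult_nonpos_nonneg)
    ultimately show "\<exists>y. (g has_real_derivative y) (at s) \<and> y \<le> 0" by blast
  next
    show "continuous_on {a..b} g"
      unfolding g_def by (intro continuous_intros cont)
  qed
  then have "f b * exp (- c * b) \<le> 0" using \<open>f a = 0\<close> by (simp add: g_def)
  then show ?thesis using nonneg by (simp add: mult_le_0_iff)
qed

lemma nonneg_vanishes_if_abs_deriv_le_mult:
  fixes f f' :: "real \<Rightarrow> real"
  assumes cont: "continuous_on {lo..hi} f"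
    and deriv: "\<And>s. lo < s \<Longrightarrow> s < hi \<Longrightarrow> (f has_real_derivative f' s) (at s)"
    and le: "\<And>s. lo < s \<Longrightarrow> s < hi \<Longrightarrow> \<bar>f' s\<bar> \<le> c * f s"
    and nonneg: "\<And>s. f s \<ge> 0"
    and a: "a \<in> {lo..hi}" "f a = 0" and t: "t \<in> {lo..hi}"
  shows "f t = 0"
proof (cases "a \<le> t")
  case True
  show ?thesis
  proof (rule nonneg_vanishes_forward_if_deriv_le_mult[OF True, where f' = f' and c = c])
    show "continuous_on {a..t} f" using cont by (rule continuous_on_subset) (use a t in auto)
    show "f' s \<le> c * f s" if "a < s" "s < t" for s
      using le[of s] that a t by auto
  qed (use a t deriv nonneg in auto)
next
  case False
  \<comment> \<open>backwards in time: run the same argument for \<open>s \<mapsto> f (- s)\<close>\<close>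
  have "f (- (- t)) = 0"
  proof (rule nonneg_vanishes_forward_if_deriv_le_mult[where f = "\<lambda>s. f (- s)" and f' = "\<lambda>s. - f' (- s)" and c = c])
    show "continuous_on {- a..- t} (\<lambda>s. f (- s))"
      using cont continuous_on_minus[OF continuous_on_id]
      by (rule continuous_on_compose2) (use a t in auto)
    show "((\<lambda>s. f (- s)) has_real_derivative - f' (- s)) (at s)" if "- a < s" "s < - t" for s
    proof -
      have "(f has_real_derivative f' (- s)) (at (- s))" using deriv that a t by simp
      from DERIV_chain2[OF this DERIV_minus[OF DERIV_ident]] show ?thesis by simp
    qed
    show "- f' (- s) \<le> c * f (- s)" if "- a < s" "s < - t" for s
      using le[of "- s"] that a t by auto
  qed (use False nonneg a in auto)
  then show ?thesis by simp
qed

lemma linear_ode_vanishes: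
  fixes y :: "real \<Rightarrow> 'a::real_inner" and L :: "'a \<Rightarrow> 'a"
  assumes L: "bounded_linear L"
    and ode: "\<And>s. s \<in> {lo..hi} \<Longrightarrow> (y has_vector_derivative L (y s)) (at s within {lo..hi})"
    and a: "a \<in> {lo..hi}" "y a = 0" and t: "t \<in> {lo..hi}"
  shows "y t = 0"
proof -
  obtain K where K: "\<And>x. norm (L x) \<le> norm x * K"
    using bounded_linear.bounded[OF L] by blast
  define f where "f s = y s \<bullet> y s" for s
  define f' where "f' s = 2 * (y s \<bullet> L (y s))" for s
  have f_deriv_within: "(f has_real_derivative f' s) (at s within {lo..hi})" if "s \<in> {lo..hi}" for s
    using has_derivative_inner[OF ode[OF that, unfolded has_vector_derivative_def]
        ode[OF that, unfolded has_vector_derivative_def]]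
    unfolding has_field_derivative_def f_def f'_def
    by (rule has_derivative_eq_rhs) (auto simp: inner_commute algebra_simps)
  have "f t = 0"
  proof (rule nonneg_vanishes_if_abs_deriv_le_mult[where f' = f' and c = "2 * K", OF _ _ _ _ a(1) _ t])
    show "continuous_on {lo..hi} f"
      using f_deriv_within by (metis DERIV_continuous continuous_on_eq_continuous_within)
    show "(f has_real_derivative f' s) (at s)" if "lo < s" "s < hi" for s
      using f_deriv_within[of s] that at_within_interior[of s "{lo..hi}"] by simp
    show "\<bar>f' s\<bar> \<le> 2 * K * f s" for s
    proof -
      have "\<bar>y s \<bullet> L (y s)\<bar> \<le> norm (y s) * norm (L (y s))" by (rule Cauchy_Schwarz_ineq2)
      also have "\<dots> \<le> norm (y s) * (norm (y s) * K)" by (rule mult_left_mono[OF K]) simp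
      finally show ?thesis by (simp add: f_def f'_def dot_square_norm power2_eq_square mult_ac)
    qed
  qed (use a in \<open>simp_all add: f_def\<close>)
  then show ?thesis by (simp add: f_def)
qed

lemma linear_ode_unique:
  fixes y z :: "real \<Rightarrow> 'a::real_inner" and L :: "'a \<Rightarrow> 'a"
  assumes L: "bounded_linear L"
    and y: "\<And>s. s \<in> {lo..hi} \<Longrightarrow> (y has_vector_derivative L (y s)) (at s within {lo..hi})"
    and z: "\<And>s. s \<in> {lo..hi} \<Longrightarrow> (z has_vector_derivative L (z s)) (at s within {lo..hi})"
    and a: "a \<in> {lo..hi}" "y a = z a" and t: "t \<in> {lo..hi}"
  shows "y t = z t"
proof -
  have "y t - z t = 0"
  proof (rule linear_ode_vanishes[OF L _ a(1) _ t])
    fix s assume "s \<in> {lo..hi}"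
    from has_vector_derivative_diff[OF y[OF this] z[OF this]]
    show "((\<lambda>s. y s - z s) has_vector_derivative L (y s - z s)) (at s within {lo..hi})"
      by (simp add: linear_diff[OF bounded_linear.linear[OF L]])
  qed (use a in simp)
  then show ?thesis by simp
qed

lemma linear_ode_invariant_kernel:
  fixes y :: "real \<Rightarrow> 'a::real_inner" and L P :: "'a \<Rightarrow> 'a"
  assumes L: "bounded_linear L" and P: "bounded_linear P" and PL: "\<And>x. P (L x) = L (P x)"
    and y: "\<And>s. s \<in> {lo..hi} \<Longrightarrow> (y has_vector_derivative L (y s)) (at s within {lo..hi})"
    and a: "a \<in> {lo..hi}" "P (y a) = 0" and t: "t \<in> {lo..hi}"
  shows "P (y t) = 0"
proof (rule linear_ode_vanishes[where y = "\<lambda>s. P (y s)", OF L _ a t])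
  fix s assume "s \<in> {lo..hi}"
  from bounded_linear.has_vector_derivative[OF P y[OF this]]
  show "((\<lambda>s. P (y s)) has_vector_derivative L (P (y s))) (at s within {lo..hi})"
    by (simp add: PL)
qed

lemma SUP_mult_nonpos_atLeastAtMost:
  fixes k m :: real
  assumes "k \<le> 0" "0 \<le> m"
  shows "(SUP n\<in>{0..m}. k * n) = k * 0"
  unfolding mult_zero_right
  by (rule cSup_eq_maximum) (use assms in \<open>auto intro: mult_nonpos_nonneg image_eqI[where x = 0]\<close>)

definition diag_mat :: "('n \<Rightarrow> complex) \<Rightarrow> complex ^ 'n ^ 'n" where
  "diag_mat p = (\<chi> i j. if i = j then p i else 0)"

definition offdiag :: "complex ^ 'n ^ 'n \<Rightarrow> complex ^ 'n ^ 'n" where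
  "offdiag X = (\<chi> i j. if i = j then 0 else X $ i $ j)"

lemma diag_mat_nth: "diag_mat p $ i $ j = (if i = j then p i else 0)"
  by (simp add: diag_mat_def)

lemma offdiag_nth: "offdiag X $ i $ j = (if i = j then 0 else X $ i $ j)"
  by (simp add: offdiag_def)

lemma offdiag_eq_0_iff: "offdiag X = 0 \<longleftrightarrow> is_diag X"
  by (auto simp: vec_eq_iff offdiag_nth is_diag_def)

lemma bounded_linear_offdiag: "bounded_linear (offdiag :: complex ^ 'n ^ 'n \<Rightarrow> _)"
  unfolding linear_conv_bounded_linear[symmetric]
  by (rule linearI) (simp_all add: vec_eq_iff offdiag_nth)

lemma diag_mat_diagonal: "is_diag X \<Longrightarrow> diag_mat (\<lambda>i. X $ i $ i) = X"
  by (simp add: is_diag_def diag_mat_def vec_eq_iff)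

lemma diag_mat_mult_nth: "(diag_mat p ** X) $ i $ j = p i * X $ i $ j"
  by (simp add: matrix_matrix_mult_def diag_mat_nth if_distrib[of "\<lambda>x. x * _"] cong: if_cong)

lemma mult_diag_mat_nth: "(X ** diag_mat p) $ i $ j = X $ i $ j * p j"
  by (simp add: matrix_matrix_mult_def diag_mat_nth if_distrib[of "\<lambda>x. _ * x"] cong: if_cong)

lemma hs_inner_diag_mat: "hs_inner (diag_mat c) M = (\<Sum>i\<in>UNIV. cnj (c i) * M $ i $ i)"
proof -
  have "cadj (diag_mat c) = diag_mat (\<lambda>i. cnj (c i))"
    by (simp add: cadj_def diag_mat_def vec_eq_iff)
  then show ?thesis by (simp add: hs_inner_def trace_def diag_mat_mult_nth)
qed

lemma cscale_nth [simp]: "cscale c A $ i $ j = c * A $ i $ j"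
  by (simp add: cscale_def)

lemma cscale_0_left [simp]: "cscale 0 A = 0"
  by (simp add: cscale_def vec_eq_iff)

lemma scaleR_mat_nth: "(r *\<^sub>R X) $ i $ j = complex_of_real r * (X :: complex ^ 'n ^ 'm) $ i $ j"
  unfolding vector_scaleR_component by (rule scaleR_conv_of_real)

lemma K_u_diag:
  assumes "is_diag C" "is_diag R"
  shows "K_u V C R = 0"
proof -
  have "K_u V (diag_mat (\<lambda>i. C $ i $ i)) (diag_mat (\<lambda>i. R $ i $ i)) = 0"
    by (simp add: K_u_def hs_inner_diag_mat commut_def diag_mat_mult_nth mult_diag_mat_nth algebra_simps)
  then show ?thesis by (simp only: diag_mat_diagonal assms)
qed

lemma sum_UNIV_bool_prod:
  "sum f (UNIV :: (bool \<times> bool) set) = f (False, False) + f (False, True) + f (True, False) + f (True, True)"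
  by (simp add: UNIV_Times_UNIV[symmetric] sum.cartesian_product[symmetric] UNIV_bool add.assoc)

lemmas qubit_mult_defs = matrix_matrix_mult_def sum_UNIV_bool_prod kron_def
  sigma_minus_def sigma_plus_def sigma_z_def I2_def mat_def

lemma sm1_mult_nth: "(sm1 ** X) $ i $ j = (if fst i then 0 else X $ (True, snd i) $ j)"
  by (cases i) (simp add: qubit_mult_defs sm1_def)
lemma sp1_mult_nth: "(sp1 ** X) $ i $ j = (if fst i then X $ (False, snd i) $ j else 0)"
  by (cases i) (simp add: qubit_mult_defs sp1_def)
lemma mult_sm1_nth: "(X ** sm1) $ i $ j = (if fst j then X $ i $ (False, snd j) else 0)"
  by (cases j) (simp add: qubit_mult_defs sm1_def)
lemma mult_sp1_nth: "(X ** sp1) $ i $ j = (if fst j then 0 else X $ i $ (True, snd j))"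
  by (cases j) (simp add: qubit_mult_defs sp1_def)
lemma sm2_mult_nth: "(sm2 ** X) $ i $ j = (if snd i then 0 else X $ (fst i, True) $ j)"
  by (cases i) (simp add: qubit_mult_defs sm2_def)
lemma sp2_mult_nth: "(sp2 ** X) $ i $ j = (if snd i then X $ (fst i, False) $ j else 0)"
  by (cases i) (simp add: qubit_mult_defs sp2_def)
lemma mult_sm2_nth: "(X ** sm2) $ i $ j = (if snd j then X $ i $ (fst j, False) else 0)"
  by (cases j) (simp add: qubit_mult_defs sm2_def)
lemma mult_sp2_nth: "(X ** sp2) $ i $ j = (if snd j then 0 else X $ i $ (fst j, True))"
  by (cases j) (simp add: qubit_mult_defs sp2_def)

lemma W1_eq_diag_mat: "W1 = diag_mat (\<lambda>i. if fst i then -1 else 1)"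
  by (simp add: vec_eq_iff W1_def diag_mat_def kron_def sigma_z_def I2_def mat_def)
lemma W2_eq_diag_mat: "W2 = diag_mat (\<lambda>i. if snd i then -1 else 1)"
  by (simp add: vec_eq_iff W2_def diag_mat_def kron_def sigma_z_def I2_def mat_def)

lemma is_diag_H0: "is_diag (H0 \<omega>1 \<omega>2)"
  by (simp add: is_diag_def H0_def W1_eq_diag_mat W2_eq_diag_mat diag_mat_nth)

lemma H0_mult_nth: "(H0 \<omega>1 \<omega>2 ** X) $ i $ j = H0 \<omega>1 \<omega>2 $ i $ i * X $ i $ j"
  using diag_mat_mult_nth[of "\<lambda>i. H0 \<omega>1 \<omega>2 $ i $ i"] by (simp add: diag_mat_diagonal is_diag_H0)
lemma mult_H0_nth: "(X ** H0 \<omega>1 \<omega>2) $ i $ j = X $ i $ j * H0 \<omega>1 \<omega>2 $ j $ j"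
  using mult_diag_mat_nth[of _ "\<lambda>i. H0 \<omega>1 \<omega>2 $ i $ i"] by (simp add: diag_mat_diagonal is_diag_H0)

lemma Hc_zero_control: "Hc \<epsilon> \<omega>1 \<omega>2 \<Lambda>1 \<Lambda>2 V 0 0 0 = H0 \<omega>1 \<omega>2"
  by (simp add: Hc_def)

lemma sp1_sm1_mult_nth: "((sp1 ** sm1) ** X) $ i $ j = (if fst i then X $ i $ j else 0)"
  by (cases i) (simp add: matrix_mul_assoc[symmetric] sm1_mult_nth sp1_mult_nth)
lemma mult_sp1_sm1_nth: "(X ** (sp1 ** sm1)) $ i $ j = (if fst j then X $ i $ j else 0)"
  by (cases j) (simp add: matrix_mul_assoc mult_sm1_nth mult_sp1_nth)
lemma sp2_sm2_mult_nth: "((sp2 ** sm2) ** X) $ i $ j = (if snd i then X $ i $ j else 0)"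
  by (cases i) (simp add: matrix_mul_assoc[symmetric] sm2_mult_nth sp2_mult_nth)
lemma mult_sp2_sm2_nth: "(X ** (sp2 ** sm2)) $ i $ j = (if snd j then X $ i $ j else 0)"
  by (cases j) (simp add: matrix_mul_assoc mult_sm2_nth mult_sp2_nth)

lemma master_rhs_zero_control_nth:
  "master_rhs \<epsilon> \<omega>1 \<omega>2 \<Lambda>1 \<Lambda>2 \<Omega>1 \<Omega>2 V 0 0 0 X $ i $ j =
     - \<i> * (H0 \<omega>1 \<omega>2 $ i $ i - H0 \<omega>1 \<omega>2 $ j $ j) * X $ i $ j
     + \<epsilon> * (\<Omega>1 * (2 * (if fst i \<or> fst j then 0 else X $ (True, snd i) $ (True, snd j))
                      - ((if fst i then X $ i $ j else 0) + (if fst j then X $ i $ j else 0)))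
          + \<Omega>2 * (2 * (if snd i \<or> snd j then 0 else X $ (fst i, True) $ (fst j, True))
                      - ((if snd i then X $ i $ j else 0) + (if snd j then X $ i $ j else 0))))"
  unfolding master_rhs_def Hc_zero_control LD_def commut_def anticommut_def
  by (simp add: H0_mult_nth mult_H0_nth sp1_sm1_mult_nth mult_sp1_sm1_nth
      sp2_sm2_mult_nth mult_sp2_sm2_nth sm1_mult_nth mult_sp1_nth sm2_mult_nth mult_sp2_nth
      algebra_simps)

lemma adjoint_rhs_zero_control_nth:
  "adjoint_rhs \<epsilon> \<omega>1 \<omega>2 \<Lambda>1 \<Lambda>2 \<Omega>1 \<Omega>2 V 0 0 0 X $ i $ j =
     - \<i> * (H0 \<omega>1 \<omega>2 $ i $ i - H0 \<omega>1 \<omega>2 $ j $ j) * X $ i $ j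
     - \<epsilon> * (\<Omega>1 * (2 * (if fst i \<and> fst j then X $ (False, snd i) $ (False, snd j) else 0)
                      - ((if fst i then X $ i $ j else 0) + (if fst j then X $ i $ j else 0)))
          + \<Omega>2 * (2 * (if snd i \<and> snd j then X $ (fst i, False) $ (fst j, False) else 0)
                      - ((if snd i then X $ i $ j else 0) + (if snd j then X $ i $ j else 0))))"
  unfolding adjoint_rhs_def Hc_zero_control LD_adj_def commut_def anticommut_def
  by (simp add: H0_mult_nth mult_H0_nth sp1_sm1_mult_nth mult_sp1_sm1_nth
      sp2_sm2_mult_nth mult_sp2_sm2_nth sp1_mult_nth mult_sm1_nth sp2_mult_nth mult_sm2_nth
      algebra_simps)

lemma master_rhs_offdiag:
  "master_rhs \<epsilon> \<omega>1 \<omega>2 \<Lambda>1 \<Lambda>2 \<Omega>1 \<Omega>2 V 0 0 0 (offdiag X)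
     = offdiag (master_rhs \<epsilon> \<omega>1 \<omega>2 \<Lambda>1 \<Lambda>2 \<Omega>1 \<Omega>2 V 0 0 0 X)"
proof -
  have "master_rhs \<epsilon> \<omega>1 \<omega>2 \<Lambda>1 \<Lambda>2 \<Omega>1 \<Omega>2 V 0 0 0 (offdiag X) $ i $ j
     = offdiag (master_rhs \<epsilon> \<omega>1 \<omega>2 \<Lambda>1 \<Lambda>2 \<Omega>1 \<Omega>2 V 0 0 0 X) $ i $ j" for i j
    by (cases i; cases j) (auto simp: master_rhs_zero_control_nth offdiag_nth)
  then show ?thesis by (simp add: vec_eq_iff)
qed

lemma adjoint_rhs_offdiag:
  "adjoint_rhs \<epsilon> \<omega>1 \<omega>2 \<Lambda>1 \<Lambda>2 \<Omega>1 \<Omega>2 V 0 0 0 (offdiag X)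
     = offdiag (adjoint_rhs \<epsilon> \<omega>1 \<omega>2 \<Lambda>1 \<Lambda>2 \<Omega>1 \<Omega>2 V 0 0 0 X)"
proof -
  have "adjoint_rhs \<epsilon> \<omega>1 \<omega>2 \<Lambda>1 \<Lambda>2 \<Omega>1 \<Omega>2 V 0 0 0 (offdiag X) $ i $ j
     = offdiag (adjoint_rhs \<epsilon> \<omega>1 \<omega>2 \<Lambda>1 \<Lambda>2 \<Omega>1 \<Omega>2 V 0 0 0 X) $ i $ j" for i j
    by (cases i; cases j) (auto simp: adjoint_rhs_zero_control_nth offdiag_nth)
  then show ?thesis by (simp add: vec_eq_iff)
qed

lemma bounded_linear_master_rhs: "bounded_linear (master_rhs \<epsilon> \<omega>1 \<omega>2 \<Lambda>1 \<Lambda>2 \<Omega>1 \<Omega>2 V 0 0 0)"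
  unfolding linear_conv_bounded_linear[symmetric]
  by (rule linearI)
    (simp_all add: vec_eq_iff master_rhs_zero_control_nth scaleR_mat_nth algebra_simps)

lemma bounded_linear_adjoint_rhs: "bounded_linear (adjoint_rhs \<epsilon> \<omega>1 \<omega>2 \<Lambda>1 \<Lambda>2 \<Omega>1 \<Omega>2 V 0 0 0)"
  unfolding linear_conv_bounded_linear[symmetric]
  by (rule linearI)
    (simp_all add: vec_eq_iff adjoint_rhs_zero_control_nth scaleR_mat_nth algebra_simps)

definition diag_kron :: "(bool \<Rightarrow> real) \<Rightarrow> (bool \<Rightarrow> real) \<Rightarrow> mat4" where
  "diag_kron p q = diag_mat (\<lambda>i. complex_of_real (p (fst i) * q (snd i)))"

(* Population generators of one qubit under its dissipator with n_j = 0 and rate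
   gamma = 2 eps Omega_j, in the Schroedinger and in the Heisenberg picture. *)
definition decay_gen :: "real \<Rightarrow> (bool \<Rightarrow> real) \<Rightarrow> bool \<Rightarrow> real" where
  "decay_gen \<gamma> p a = (if a then - \<gamma> * p True else \<gamma> * p True)"

definition decay_gen_adj :: "real \<Rightarrow> (bool \<Rightarrow> real) \<Rightarrow> bool \<Rightarrow> real" where
  "decay_gen_adj \<gamma> d a = (if a then \<gamma> * (d True - d False) else 0)"

lemma master_rhs_diag_kron:
  "master_rhs \<epsilon> \<omega>1 \<omega>2 \<Lambda>1 \<Lambda>2 \<Omega>1 \<Omega>2 V 0 0 0 (diag_kron p q)
     = diag_kron (decay_gen (2 * \<epsilon> * \<Omega>1) p) q + diag_kron p (decay_gen (2 * \<epsilon> * \<Omega>2) q)"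
proof -
  have "master_rhs \<epsilon> \<omega>1 \<omega>2 \<Lambda>1 \<Lambda>2 \<Omega>1 \<Omega>2 V 0 0 0 (diag_kron p q) $ i $ j
     = (diag_kron (decay_gen (2 * \<epsilon> * \<Omega>1) p) q + diag_kron p (decay_gen (2 * \<epsilon> * \<Omega>2) q)) $ i $ j" for i j
    by (cases i; cases j)
      (auto simp: master_rhs_zero_control_nth diag_kron_def diag_mat_nth decay_gen_def algebra_simps)
  then show ?thesis by (simp add: vec_eq_iff)
qed

lemma adjoint_rhs_diag_kron:
  "adjoint_rhs \<epsilon> \<omega>1 \<omega>2 \<Lambda>1 \<Lambda>2 \<Omega>1 \<Omega>2 V 0 0 0 (diag_kron p q)
     = diag_kron (decay_gen_adj (2 * \<epsilon> * \<Omega>1) p) q + diag_kron p (decay_gen_adj (2 * \<epsilon> * \<Omega>2) q)"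
proof -
  have "adjoint_rhs \<epsilon> \<omega>1 \<omega>2 \<Lambda>1 \<Lambda>2 \<Omega>1 \<Omega>2 V 0 0 0 (diag_kron p q) $ i $ j
     = (diag_kron (decay_gen_adj (2 * \<epsilon> * \<Omega>1) p) q + diag_kron p (decay_gen_adj (2 * \<epsilon> * \<Omega>2) q)) $ i $ j" for i j
    by (cases i; cases j)
      (auto simp: adjoint_rhs_zero_control_nth diag_kron_def diag_mat_nth decay_gen_adj_def algebra_simps)
  then show ?thesis by (simp add: vec_eq_iff)
qed

lemma diag_kron_eq_sum:
  "diag_kron p q = (\<Sum>i\<in>UNIV. (p (fst i) * q (snd i)) *\<^sub>R diag_mat (\<lambda>k. if k = i then 1 else 0))"
proof -
  have "diag_kron p q $ i $ j
     = (\<Sum>k\<in>UNIV. (p (fst k) * q (snd k)) *\<^sub>R diag_mat (\<lambda>l. if l = k then 1 else 0)) $ i $ j" for i j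
    by (cases i; cases j) (simp add: diag_kron_def diag_mat_nth sum_UNIV_bool_prod scaleR_mat_nth,
        simp add: scaleR_conv_of_real)
  then show ?thesis by (simp add: vec_eq_iff)
qed

lemma diag_kron_has_vector_derivative:
  assumes "\<And>a. ((\<lambda>t. p t a) has_real_derivative p' a) (at t within S)"
    and "\<And>b. ((\<lambda>t. q t b) has_real_derivative q' b) (at t within S)"
  shows "((\<lambda>t. diag_kron (p t) (q t)) has_vector_derivative
           diag_kron p' (q t) + diag_kron (p t) q') (at t within S)"
proof -
  let ?E = "\<lambda>i. diag_mat (\<lambda>k. if k = i then 1 else 0) :: mat4"
  have "((\<lambda>t. \<Sum>i\<in>UNIV. (p t (fst i) * q t (snd i)) *\<^sub>R ?E i) has_vector_derivative
     (\<Sum>i\<in>UNIV. (p t (fst i) * q t (snd i)) *\<^sub>R 0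
        + (p' (fst i) * q t (snd i) + q' (snd i) * p t (fst i)) *\<^sub>R ?E i)) (at t within S)"
    by (intro has_vector_derivative_sum has_vector_derivative_scaleR DERIV_mult assms
        has_vector_derivative_const)
  then show ?thesis
    by (simp add: diag_kron_eq_sum scaleR_add_left sum.distrib algebra_simps)
qed

(* The solutions of part (ii) for rho_0 = I/4 and rho_target = diag(1,0,0,0), one qubit
   at a time. *)
definition rho_bar_factor :: "real \<Rightarrow> real \<Rightarrow> bool \<Rightarrow> real" where
  "rho_bar_factor \<gamma> t a = (if a then exp (- \<gamma> * t) / 2 else 1 - exp (- \<gamma> * t) / 2)"

definition chi_bar_factor :: "real \<Rightarrow> real \<Rightarrow> real \<Rightarrow> bool \<Rightarrow> real" where
  "chi_bar_factor \<gamma> T t a = (if a then 1 - exp (\<gamma> * (t - T)) else 1)"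

definition rho_bar :: "real \<Rightarrow> real \<Rightarrow> real \<Rightarrow> real \<Rightarrow> mat4" where
  "rho_bar \<epsilon> \<Omega>1 \<Omega>2 t = diag_kron (rho_bar_factor (2 * \<epsilon> * \<Omega>1) t) (rho_bar_factor (2 * \<epsilon> * \<Omega>2) t)"

definition chi_bar :: "real \<Rightarrow> real \<Rightarrow> real \<Rightarrow> real \<Rightarrow> real \<Rightarrow> mat4" where
  "chi_bar \<epsilon> \<Omega>1 \<Omega>2 T t =
     diag_kron (chi_bar_factor (2 * \<epsilon> * \<Omega>1) T t) (chi_bar_factor (2 * \<epsilon> * \<Omega>2) T t)"

lemma rho_bar_factor_has_real_derivative:
  "((\<lambda>t. rho_bar_factor \<gamma> t a) has_real_derivative decay_gen \<gamma> (rho_bar_factor \<gamma> t) a) (at t within S)"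
  by (cases a) (auto simp: rho_bar_factor_def decay_gen_def intro!: derivative_eq_intros)

lemma chi_bar_factor_has_real_derivative:
  "((\<lambda>t. chi_bar_factor \<gamma> T t a) has_real_derivative decay_gen_adj \<gamma> (chi_bar_factor \<gamma> T t) a)
     (at t within S)"
  by (cases a) (auto simp: chi_bar_factor_def decay_gen_adj_def intro!: derivative_eq_intros)

lemma rho_bar_solves_master_equation:
  "(rho_bar \<epsilon> \<Omega>1 \<Omega>2 has_vector_derivative
      master_rhs \<epsilon> \<omega>1 \<omega>2 \<Lambda>1 \<Lambda>2 \<Omega>1 \<Omega>2 V 0 0 0 (rho_bar \<epsilon> \<Omega>1 \<Omega>2 t)) (at t within S)"
  unfolding rho_bar_def[abs_def] master_rhs_diag_kron
  by (intro diag_kron_has_vector_derivative rho_bar_factor_has_real_derivative)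

lemma chi_bar_solves_adjoint_system:
  "(chi_bar \<epsilon> \<Omega>1 \<Omega>2 T has_vector_derivative
      adjoint_rhs \<epsilon> \<omega>1 \<omega>2 \<Lambda>1 \<Lambda>2 \<Omega>1 \<Omega>2 V 0 0 0 (chi_bar \<epsilon> \<Omega>1 \<Omega>2 T t)) (at t within S)"
  unfolding chi_bar_def[abs_def] adjoint_rhs_diag_kron
  by (intro diag_kron_has_vector_derivative chi_bar_factor_has_real_derivative)

lemma rho_bar_0: "rho_bar \<epsilon> \<Omega>1 \<Omega>2 0 = cscale (1/4) I4"
proof -
  have "rho_bar \<epsilon> \<Omega>1 \<Omega>2 0 $ i $ j = cscale (1/4) I4 $ i $ j" for i j
    by (cases i; cases j)
      (simp add: rho_bar_def diag_kron_def diag_mat_nth rho_bar_factor_def I4_def mat_def)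
  then show ?thesis by (simp add: vec_eq_iff)
qed

lemma chi_bar_T: "chi_bar \<epsilon> \<Omega>1 \<Omega>2 T T = target00"
proof -
  have "chi_bar \<epsilon> \<Omega>1 \<Omega>2 T T $ i $ j = target00 $ i $ j" for i j
    by (cases i; cases j) (simp add: chi_bar_def diag_kron_def diag_mat_nth chi_bar_factor_def target00_def)
  then show ?thesis by (simp add: vec_eq_iff)
qed

lemma K_n1_diag_kron:
  "K_n1 \<epsilon> \<Lambda> \<Omega> (diag_kron d1 d2) (diag_kron r1 r2) =
     of_real (2 * \<epsilon> * \<Omega> * (d1 False - d1 True) * (r1 True - r1 False)
                * (d2 False * r2 False + d2 True * r2 True))"
  by (simp add: K_n1_def K_n_gen_def diag_kron_def hs_inner_diag_mat sum_UNIV_bool_prod commut_def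
      W1_eq_diag_mat diag_mat_mult_nth mult_diag_mat_nth diag_mat_nth
      sm1_def sp1_def qubit_mult_defs algebra_simps)

lemma K_n2_diag_kron:
  "K_n2 \<epsilon> \<Lambda> \<Omega> (diag_kron d1 d2) (diag_kron r1 r2) =
     of_real (2 * \<epsilon> * \<Omega> * (d2 False - d2 True) * (r2 True - r2 False)
                * (d1 False * r1 False + d1 True * r1 True))"
  by (simp add: K_n2_def K_n_gen_def diag_kron_def hs_inner_diag_mat sum_UNIV_bool_prod commut_def
      W2_eq_diag_mat diag_mat_mult_nth mult_diag_mat_nth diag_mat_nth
      sm2_def sp2_def qubit_mult_defs algebra_simps)

lemma switching_closed_form:
  fixes \<epsilon> \<Omega>a \<Omega>b T t :: real
  shows "2 * \<epsilon> * \<Omega>a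
      * (chi_bar_factor (2 * \<epsilon> * \<Omega>a) T t False - chi_bar_factor (2 * \<epsilon> * \<Omega>a) T t True)
      * (rho_bar_factor (2 * \<epsilon> * \<Omega>a) t True - rho_bar_factor (2 * \<epsilon> * \<Omega>a) t False)
      * (chi_bar_factor (2 * \<epsilon> * \<Omega>b) T t False * rho_bar_factor (2 * \<epsilon> * \<Omega>b) t False
         + chi_bar_factor (2 * \<epsilon> * \<Omega>b) T t True * rho_bar_factor (2 * \<epsilon> * \<Omega>b) t True)
    = - exp (-2 * \<epsilon> * (\<Omega>a + \<Omega>b) * T) * (exp (2 * \<epsilon> * \<Omega>a * t) - 1)
        * (2 * exp (2 * \<epsilon> * \<Omega>b * T) - 1) * \<epsilon> * \<Omega>a"
proof -
  define x X y Y where "x = exp (2 * \<epsilon> * \<Omega>a * t)" and "X = exp (2 * \<epsilon> * \<Omega>a * T)"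
    and "y = exp (2 * \<epsilon> * \<Omega>b * t)" and "Y = exp (2 * \<epsilon> * \<Omega>b * T)"
  have pos: "x > 0" "X > 0" "y > 0" "Y > 0" by (simp_all add: x_def X_def y_def Y_def)
  have exps: "exp (2 * \<epsilon> * \<Omega>a * (t - T)) = x / X" "exp (2 * \<epsilon> * \<Omega>b * (t - T)) = y / Y"
    "exp (- (2 * \<epsilon> * \<Omega>a) * t) = 1 / x" "exp (- (2 * \<epsilon> * \<Omega>b) * t) = 1 / y"
    "exp (-2 * \<epsilon> * (\<Omega>a + \<Omega>b) * T) = 1 / (X * Y)"
    by (simp_all add: x_def X_def y_def Y_def algebra_simps flip: exp_diff exp_minus exp_add
        inverse_eq_divide)
  have "2 * \<epsilon> * \<Omega>a
      * (chi_bar_factor (2 * \<epsilon> * \<Omega>a) T t False - chi_bar_factor (2 * \<epsilon> * \<Omega>a) T t True)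
      * (rho_bar_factor (2 * \<epsilon> * \<Omega>a) t True - rho_bar_factor (2 * \<epsilon> * \<Omega>a) t False)
      * (chi_bar_factor (2 * \<epsilon> * \<Omega>b) T t False * rho_bar_factor (2 * \<epsilon> * \<Omega>b) t False
         + chi_bar_factor (2 * \<epsilon> * \<Omega>b) T t True * rho_bar_factor (2 * \<epsilon> * \<Omega>b) t True)
    = - (1 / (X * Y)) * (x - 1) * (2 * Y - 1) * \<epsilon> * \<Omega>a"
    unfolding chi_bar_factor_def rho_bar_factor_def exps
    using pos by (simp add: field_simps)
  then show ?thesis unfolding exps(5) x_def Y_def .
qed

lemma switching_closed_form_nonpos:
  fixes \<epsilon> \<Omega>a \<Omega>b T t c :: real
  assumes "0 \<le> \<epsilon>" "0 \<le> \<Omega>a" "0 \<le> \<Omega>b" "0 \<le> t" "0 \<le> T"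
  shows "- exp c * (exp (2 * \<epsilon> * \<Omega>a * t) - 1) * (2 * exp (2 * \<epsilon> * \<Omega>b * T) - 1) * \<epsilon> * \<Omega>a \<le> 0"
proof -
  have "1 \<le> exp (2 * \<epsilon> * \<Omega>a * t)" "1 \<le> exp (2 * \<epsilon> * \<Omega>b * T)"
    using assms by simp_all
  then have "0 \<le> exp (2 * \<epsilon> * \<Omega>a * t) - 1" "0 \<le> 2 * exp (2 * \<epsilon> * \<Omega>b * T) - 1"
    by linarith+
  then have "0 \<le> exp c * (exp (2 * \<epsilon> * \<Omega>a * t) - 1) * (2 * exp (2 * \<epsilon> * \<Omega>b * T) - 1) * \<epsilon> * \<Omega>a"
    using assms by (intro mult_nonneg_nonneg) auto
  then show ?thesis by simp
qed

lemma K_n1_chi_bar_rho_bar: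
  "K_n1 \<epsilon> \<Lambda>1 \<Omega>1 (chi_bar \<epsilon> \<Omega>1 \<Omega>2 T t) (rho_bar \<epsilon> \<Omega>1 \<Omega>2 t) =
     of_real (- exp (-2 * \<epsilon> * (\<Omega>1 + \<Omega>2) * T) * (exp (2 * \<epsilon> * \<Omega>1 * t) - 1)
                * (2 * exp (2 * \<epsilon> * \<Omega>2 * T) - 1) * \<epsilon> * \<Omega>1)"
  unfolding chi_bar_def rho_bar_def K_n1_diag_kron switching_closed_form ..

lemma K_n2_chi_bar_rho_bar:
  "K_n2 \<epsilon> \<Lambda>2 \<Omega>2 (chi_bar \<epsilon> \<Omega>1 \<Omega>2 T t) (rho_bar \<epsilon> \<Omega>1 \<Omega>2 t) =
     of_real (- exp (-2 * \<epsilon> * (\<Omega>1 + \<Omega>2) * T) * (exp (2 * \<epsilon> * \<Omega>2 * t) - 1)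
                * (2 * exp (2 * \<epsilon> * \<Omega>1 * T) - 1) * \<epsilon> * \<Omega>2)"
  unfolding chi_bar_def rho_bar_def K_n2_diag_kron switching_closed_form by (simp only: add.commute)

theorem mainTheorem6:
  fixes \<epsilon> \<omega>1 \<omega>2 \<Lambda>1 \<Lambda>2 \<Omega>1 \<Omega>2 T \<mu> n_max :: real
    and V \<rho>0 \<rho>_target :: mat4
    and \<rho> chi :: "real \<Rightarrow> mat4"
  assumes pos: "\<epsilon> > 0" "\<omega>1 > 0" "\<omega>2 > 0" "\<Lambda>1 > 0" "\<Lambda>2 > 0" "\<Omega>1 > 0" "\<Omega>2 > 0"
    and T_pos: "T > 0" and \<mu>_pos: "\<mu> > 0" and nmax_pos: "n_max > 0"
    and V_herm: "hermitian V"
    and dens0: "density_matrix \<rho>0" and denst: "density_matrix \<rho>_target"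
    and diag0: "is_diag \<rho>0" and diagt: "is_diag \<rho>_target"
    and \<rho>_sol: "\<forall>t\<in>{0..T}. (\<rho> has_vector_derivative
                  master_rhs \<epsilon> \<omega>1 \<omega>2 \<Lambda>1 \<Lambda>2 \<Omega>1 \<Omega>2 V 0 0 0 (\<rho> t)) (at t within {0..T})"
    and \<rho>_init: "\<rho> 0 = \<rho>0"
    and chi_sol: "\<forall>t\<in>{0..T}. (chi has_vector_derivative
                  adjoint_rhs \<epsilon> \<omega>1 \<omega>2 \<Lambda>1 \<Lambda>2 \<Omega>1 \<Omega>2 V 0 0 0 (chi t)) (at t within {0..T})"
    and chi_final: "chi T = \<rho>_target"
  shows "(\<forall>t\<in>{0..T}. is_diag (\<rho> t) \<and> is_diag (chi t) \<and> K_u V (chi t) (\<rho> t) = 0)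
    \<and> (\<rho>0 = cscale (1/4) I4 \<and> \<rho>_target = target00 \<longrightarrow>
        (\<forall>t\<in>{0..T}.
           K_n1 \<epsilon> \<Lambda>1 \<Omega>1 (chi t) (\<rho> t) =
             of_real (- exp (-2 * \<epsilon> * (\<Omega>1 + \<Omega>2) * T) * (exp (2 * \<epsilon> * \<Omega>1 * t) - 1)
                        * (2 * exp (2 * \<epsilon> * \<Omega>2 * T) - 1) * \<epsilon> * \<Omega>1)
         \<and> - exp (-2 * \<epsilon> * (\<Omega>1 + \<Omega>2) * T) * (exp (2 * \<epsilon> * \<Omega>1 * t) - 1)
                        * (2 * exp (2 * \<epsilon> * \<Omega>2 * T) - 1) * \<epsilon> * \<Omega>1 \<le> 0
         \<and> K_n2 \<epsilon> \<Lambda>2 \<Omega>2 (chi t) (\<rho> t) =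
             of_real (- exp (-2 * \<epsilon> * (\<Omega>1 + \<Omega>2) * T) * (exp (2 * \<epsilon> * \<Omega>2 * t) - 1)
                        * (2 * exp (2 * \<epsilon> * \<Omega>1 * T) - 1) * \<epsilon> * \<Omega>2)
         \<and> - exp (-2 * \<epsilon> * (\<Omega>1 + \<Omega>2) * T) * (exp (2 * \<epsilon> * \<Omega>2 * t) - 1)
                        * (2 * exp (2 * \<epsilon> * \<Omega>1 * T) - 1) * \<epsilon> * \<Omega>2 \<le> 0
         \<and> (SUP u\<in>{-\<mu>..\<mu>}. Re (K_u V (chi t) (\<rho> t)) * u) = Re (K_u V (chi t) (\<rho> t)) * 0
         \<and> (SUP n\<in>{0..n_max}. Re (K_n1 \<epsilon> \<Lambda>1 \<Omega>1 (chi t) (\<rho> t)) * n)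
              = Re (K_n1 \<epsilon> \<Lambda>1 \<Omega>1 (chi t) (\<rho> t)) * 0
         \<and> (SUP n\<in>{0..n_max}. Re (K_n2 \<epsilon> \<Lambda>2 \<Omega>2 (chi t) (\<rho> t)) * n)
              = Re (K_n2 \<epsilon> \<Lambda>2 \<Omega>2 (chi t) (\<rho> t)) * 0))"
proof -
  note master_linear = bounded_linear_master_rhs[of \<epsilon> \<omega>1 \<omega>2 \<Lambda>1 \<Lambda>2 \<Omega>1 \<Omega>2 V]
  note adjoint_linear = bounded_linear_adjoint_rhs[of \<epsilon> \<omega>1 \<omega>2 \<Lambda>1 \<Lambda>2 \<Omega>1 \<Omega>2 V]
  have ends: "0 \<in> {0..T}" "T \<in> {0..T}" using T_pos by auto
  have diag: "is_diag (\<rho> t)" "is_diag (chi t)" if t: "t \<in> {0..T}" for t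
    using linear_ode_invariant_kernel[OF master_linear bounded_linear_offdiag
        master_rhs_offdiag[symmetric] \<rho>_sol[rule_format] ends(1) _ t]
      linear_ode_invariant_kernel[OF adjoint_linear bounded_linear_offdiag
        adjoint_rhs_offdiag[symmetric] chi_sol[rule_format] ends(2) _ t]
      diag0 diagt \<rho>_init chi_final
    by (simp_all add: offdiag_eq_0_iff)
  have K_u_0: "K_u V (chi t) (\<rho> t) = 0" if "t \<in> {0..T}" for t
    using K_u_diag diag that by blast
  have closed_form: "\<rho> t = rho_bar \<epsilon> \<Omega>1 \<Omega>2 t" "chi t = chi_bar \<epsilon> \<Omega>1 \<Omega>2 T t"
    if "\<rho>0 = cscale (1/4) I4" "\<rho>_target = target00" "t \<in> {0..T}" for t
    using linear_ode_unique[OF master_linear \<rho>_sol[rule_format] rho_bar_solves_master_equation ends(1) _ that(3)]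
      linear_ode_unique[OF adjoint_linear chi_sol[rule_format] chi_bar_solves_adjoint_system ends(2) _ that(3)]
      that \<rho>_init chi_final rho_bar_0 chi_bar_T
    by simp_all
  have nonpos: "- exp (-2 * \<epsilon> * (\<Omega>1 + \<Omega>2) * T) * (exp (2 * \<epsilon> * \<Omega>a * t) - 1)
      * (2 * exp (2 * \<epsilon> * \<Omega>b * T) - 1) * \<epsilon> * \<Omega>a \<le> 0"
    if "\<Omega>a > 0" "\<Omega>b > 0" "t \<in> {0..T}" for \<Omega>a \<Omega>b t
    by (rule switching_closed_form_nonpos) (use that pos in auto)
  show ?thesis
  proof (intro conjI ballI impI; (elim conjE)?)
    fix t assume "t \<in> {0..T}"
    then show "is_diag (\<rho> t)" "is_diag (chi t)" "K_u V (chi t) (\<rho> t) = 0"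
      and "(SUP u\<in>{-\<mu>..\<mu>}. Re (K_u V (chi t) (\<rho> t)) * u) = Re (K_u V (chi t) (\<rho> t)) * 0"
      using diag K_u_0 \<mu>_pos by auto
  qed (use T_pos pos nmax_pos in
      \<open>simp_all only: closed_form K_n1_chi_bar_rho_bar K_n2_chi_bar_rho_bar Re_complex_of_real nonpos
        SUP_mult_nonpos_atLeastAtMost less_imp_le simp_thms\<close>)
qed

end
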